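(* Let $T$ be a finite rooted tree with root $P$ and exactly $n \ge 1$ non-root nodes, and set $k^* = \lfloor (n-1)/2 \rfloor$. Then $$\mathrm{IDI}(T) \le (1 + k^* )(n - k^* ).$$ This bound is attained by the following tree. Take a path $P \to p_1 \to \dots \to p_{k^*}$. Then attach $n - k^*$ leaves as children of $p_{k^*}$, or as children of $P$ if $k^* = 0$. More generally, for $0 \le k \le n-1$, let $T_k$ be the tree consisting of a path $P \to p_1 \to \dots \to p_k$ together with $n-k$ leaves attached as children of the last path node ($p_k$, or $P$ if $k=0$). Then $\mathrm{IDI}(T_k) = k(n-k) + (n-k) = (k+1)(n-k)$, and $k^*$ maximizes $(k+1)(n-k)$ over integers $0 \le k \le n-1$.
   Context: For a finite rooted tree $T$ with root $P$, a leaf is a node with no children. The Influence Dispersion Index is $\mathrm{IDI}(T) = \sum_{\ell \in L(T)} \mathrm{dist}(P,\ell)$, where $L(T)$ is the set of leaves of $T$ and $\mathrm{dist}(P,\ell)$ is the number of edges on the path from $P$ to $\ell$. The paper writes the maximizer as $k = \lfloor (n-1)/2 \rceil$, meaning $(n-1)/2$ rounded to an integer. Either rounding gives the same value of $(1+k)(n-k)$. *)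

theory Defs
  imports Main
begin

text \<open>A finite rooted tree is represented by a finite vertex set V, a root r \<in> V,
and a parent function par: every non-root vertex v has parent par v \<in> V, and
iterating par from any vertex eventually reaches the root (so the edge set
{(v, par v) | v \<in> V - {r}} forms a tree; the value par r is irrelevant).\<close>

definition rooted_tree :: "'a set \<Rightarrow> 'a \<Rightarrow> ('a \<Rightarrow> 'a) \<Rightarrow> bool" where
  "rooted_tree V r par \<longleftrightarrow>
     finite V \<and> r \<in> V \<and> (\<forall>v \<in> V - {r}. par v \<in> V) \<and>
     (\<forall>v \<in> V. \<exists>k. (par ^^ k) v = r)"

definition depth :: "'a \<Rightarrow> ('a \<Rightarrow> 'a) \<Rightarrow> 'a \<Rightarrow> nat" where
  "depth r par v = (LEAST k. (par ^^ k) v = r)"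

definition children :: "'a set \<Rightarrow> 'a \<Rightarrow> ('a \<Rightarrow> 'a) \<Rightarrow> 'a \<Rightarrow> 'a set" where
  "children V r par v = {w \<in> V - {r}. par w = v}"

definition leaves :: "'a set \<Rightarrow> 'a \<Rightarrow> ('a \<Rightarrow> 'a) \<Rightarrow> 'a set" where
  "leaves V r par = {v \<in> V. children V r par v = {}}"

definition IDI :: "'a set \<Rightarrow> 'a \<Rightarrow> ('a \<Rightarrow> 'a) \<Rightarrow> nat" where
  "IDI V r par = (\<Sum>l \<in> leaves V r par. depth r par l)"

text \<open>The tree T_k on vertices {0..n}: root 0, path 0 -> 1 -> ... -> k, and
leaves k+1, ..., n all attached to k (to the root 0 if k = 0).\<close>
definition Tk_par :: "nat \<Rightarrow> nat \<Rightarrow> nat \<Rightarrow> nat" where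
  "Tk_par n k v = (if v \<le> k then v - 1 else k)"

end

theory Submission
  imports Defs
begin

text \<open>Let L be the set of non-root leaves and c = |L|. The proper ancestors of any vertex v,
other than the root, are distinct non-root vertices that are not leaves, so
c + depth v \<le> n + 1. Hence every leaf has depth at most n + 1 - c, and
IDI \<le> c (n + 1 - c) = (k + 1)(n - k) with k = n - c. The concave function
k \<mapsto> (k + 1)(n - k) is maximal at k = \<lfloor>(n - 1)/2\<rfloor>, and T_k attains (k + 1)(n - k)
because its n - k leaves all have depth k + 1.\<close>

lemma Suc_mult_diff_le_half:
  fixes n k :: nat
  shows "(k + 1) * (n - k) \<le> ((n - 1) div 2 + 1) * (n - (n - 1) div 2)"
proof (cases "k < n")
  case True
  define h where "h = (n - 1) div 2"
  define e where "e = (n - 1) mod 2"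
  have "h < n" and e01: "e = 0 \<or> e = 1" and "n - 1 = 2 * h + e"
    using True by (auto simp: h_def e_def)
  then have n_eq: "int n - 1 = 2 * int h + int e"
    using True by linarith
  \<comment> \<open>f(h) - f(k) = (h - k)(n - 1 - h - k) for f(x) = (x + 1)(n - x)\<close>
  have "(int h + 1) * (int n - int h) - (int k + 1) * (int n - int k)
        = (int h - int k) * (int h - int k + int e)"
    using n_eq by (simp add: algebra_simps)
  moreover have "0 \<le> (int h - int k) * (int h - int k + int e)"
    using e01 by (cases "int k \<le> int h") (auto intro: mult_nonpos_nonpos)
  ultimately have "(int k + 1) * (int n - int k) \<le> (int h + 1) * (int n - int h)"
    by linarith
  moreover have "int ((k + 1) * (n - k)) = (int k + 1) * (int n - int k)"
    and "int ((h + 1) * (n - h)) = (int h + 1) * (int n - int h)"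
    using True \<open>h < n\<close> by (simp_all only: of_nat_mult of_nat_add of_nat_1 of_nat_diff less_imp_le)
  ultimately have "int ((k + 1) * (n - k)) \<le> int ((h + 1) * (n - h))"
    by simp
  then show ?thesis
    unfolding h_def by (simp only: of_nat_le_iff)
qed simp


lemma depth_root: "depth r par r = 0"
  unfolding depth_def by (rule Least_equality) auto

lemma funpow_depth_eq_root: "(par ^^ j) v = r \<Longrightarrow> (par ^^ depth r par v) v = r"
  unfolding depth_def by (rule LeastI)

lemma depth_parent:
  assumes "(par ^^ j) v = r" and "v \<noteq> r"
  shows "depth r par v = Suc (depth r par (par v))"
  unfolding depth_def using assms
  by (subst Least_Suc[where n = j]) (simp_all add: funpow_Suc_right del: funpow.simps)

lemma depth_funpow:
  assumes "(par ^^ j) v = r" and "i \<le> depth r par v"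
  shows "depth r par ((par ^^ i) v) = depth r par v - i"
  using assms(2)
proof (induction i)
  case (Suc i)
  let ?u = "(par ^^ i) v"
  have "(par ^^ (depth r par v - i)) ?u = (par ^^ (depth r par v - i + i)) v"
    by (simp add: funpow_add)
  also have "\<dots> = r"
    using funpow_depth_eq_root[OF assms(1)] Suc.prems by simp
  finally have "(par ^^ (depth r par v - i)) ?u = r" .
  moreover have "?u \<noteq> r"
    using Suc depth_root[of r par] by auto
  ultimately have "depth r par ?u = Suc (depth r par (par ?u))"
    by (rule depth_parent)
  then show ?case
    using Suc by simp
qed simp

lemma ancestor_nonroot:
  assumes T: "rooted_tree V r par" and "v \<in> V" and "i < depth r par v"
  shows "(par ^^ i) v \<in> V - {r}"
  using assms(3)
proof (induction i)
  case 0
  then show ?case using \<open>v \<in> V\<close> depth_root[of r par] by auto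
next
  case (Suc i)
  obtain j where reach: "(par ^^ j) v = r"
    using T \<open>v \<in> V\<close> unfolding rooted_tree_def by blast
  have "par ((par ^^ i) v) \<in> V"
    using T Suc unfolding rooted_tree_def by auto
  moreover have "(par ^^ Suc i) v \<noteq> r"
    using depth_funpow[OF reach, of "Suc i"] Suc.prems depth_root[of r par] by auto
  ultimately show ?case by simp
qed

lemma ancestor_not_leaf:
  assumes "rooted_tree V r par" and "v \<in> V" and "i < depth r par v"
  shows "(par ^^ Suc i) v \<notin> leaves V r par"
proof -
  have "(par ^^ i) v \<in> children V r par ((par ^^ Suc i) v)"
    using ancestor_nonroot[OF assms] unfolding children_def by simp
  then show ?thesis
    unfolding leaves_def by blast
qed

lemma card_leaves_add_depth_le:
  assumes T: "rooted_tree V r par" and "v \<in> V"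
  shows "card (leaves V r par - {r}) + depth r par v \<le> card (V - {r}) + 1"
proof -
  obtain j where reach: "(par ^^ j) v = r"
    using T \<open>v \<in> V\<close> unfolding rooted_tree_def by blast
  define d where "d = depth r par v"
  define A where "A = (\<lambda>i. (par ^^ Suc i) v) ` {..<d - 1}"
  have "inj_on (\<lambda>i. (par ^^ Suc i) v) {..<d - 1}"
  proof (rule inj_onI)
    fix x y assume "x \<in> {..<d - 1}" "y \<in> {..<d - 1}" and eq: "(par ^^ Suc x) v = (par ^^ Suc y) v"
    then have "Suc x \<le> d" "Suc y \<le> d" by auto
    moreover have "d - Suc x = d - Suc y"
      using depth_funpow[OF reach, of "Suc x"] depth_funpow[OF reach, of "Suc y"] eq calculation
      unfolding d_def by simp
    ultimately show "x = y" by simp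
  qed
  then have "card A = d - 1"
    unfolding A_def by (simp add: card_image)
  have "(par ^^ Suc i) v \<in> (V - {r}) - leaves V r par" if "i < d - 1" for i
    using ancestor_nonroot[OF assms, of "Suc i"] ancestor_not_leaf[OF assms, of i] that
    unfolding d_def by (simp del: funpow.simps)
  then have "A \<subseteq> (V - {r}) - leaves V r par"
    unfolding A_def by blast
  moreover have "finite V"
    using T unfolding rooted_tree_def by simp
  ultimately have "card (A \<union> (leaves V r par - {r})) \<le> card (V - {r})"
    by (intro card_mono) (auto simp: leaves_def)
  moreover have "card (A \<union> (leaves V r par - {r})) = card A + card (leaves V r par - {r})"
    using \<open>A \<subseteq> _\<close> \<open>finite V\<close>
    by (intro card_Un_disjoint) (auto intro: finite_subset simp: leaves_def)
  ultimately show ?thesis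
    using \<open>card A = d - 1\<close> unfolding d_def by linarith
qed

theorem IDI_le:
  assumes T: "rooted_tree V r par" and n: "card (V - {r}) = n"
  shows "IDI V r par \<le> (1 + (n - 1) div 2) * (n - (n - 1) div 2)"
proof -
  define L where "L = leaves V r par - {r}"
  have "finite V" using T unfolding rooted_tree_def by simp
  then have "finite (leaves V r par)" by (simp add: leaves_def)
  have "card L \<le> n"
    unfolding L_def n[symmetric] using \<open>finite V\<close> by (intro card_mono) (auto simp: leaves_def)
  have "IDI V r par = (\<Sum>l\<in>L. depth r par l)"
    unfolding IDI_def L_def using \<open>finite (leaves V r par)\<close>
    by (intro sum.mono_neutral_right) (auto simp: depth_root)
  also have "\<dots> \<le> card L * (n + 1 - card L)"
  proof -
    have "depth r par l \<le> n + 1 - card L" if "l \<in> L" for l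
    proof -
      have "l \<in> V" using that by (simp add: L_def leaves_def)
      then show ?thesis
        using card_leaves_add_depth_le[OF T] n unfolding L_def by fastforce
    qed
    then show ?thesis
      using sum_bounded_above[of L "depth r par"] by simp
  qed
  also have "\<dots> = ((n - card L) + 1) * (n - (n - card L))"
    using \<open>card L \<le> n\<close> by (simp add: Suc_diff_le)
  also have "\<dots> \<le> (1 + (n - 1) div 2) * (n - (n - 1) div 2)"
    by (subst add.commute[of 1]) (rule Suc_mult_diff_le_half)
  finally show ?thesis .
qed


lemma Tk_par_funpow_path: "v \<le> k \<Longrightarrow> (Tk_par n k ^^ j) v = v - j"
  by (induction j) (auto simp: Tk_par_def)

lemma Tk_par_funpow_leaf: "k < v \<Longrightarrow> (Tk_par n k ^^ Suc j) v = k - j"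
  by (induction j) (auto simp: Tk_par_def)

lemma rooted_tree_Tk:
  assumes "k \<le> n"
  shows "rooted_tree {0..n} 0 (Tk_par n k)"
  unfolding rooted_tree_def
proof (intro conjI ballI)
  fix v :: nat
  show "\<exists>j. (Tk_par n k ^^ j) v = 0"
  proof (cases "v \<le> k")
    case True
    then show ?thesis using Tk_par_funpow_path[OF True, where n = n and j = v] by auto
  next
    case False
    then show ?thesis using Tk_par_funpow_leaf[where v = v and n = n and j = k] by (intro exI[of _ "Suc k"]) simp
  qed
qed (use assms in \<open>auto simp: Tk_par_def\<close>)

lemma depth_Tk_leaf:
  assumes "k < v"
  shows "depth 0 (Tk_par n k) v = Suc k"
  unfolding depth_def
proof (rule Least_equality)
  show "(Tk_par n k ^^ Suc k) v = 0"
    using Tk_par_funpow_leaf[OF assms, where n = n and j = k] by simp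
next
  fix y assume "(Tk_par n k ^^ y) v = 0"
  then show "Suc k \<le> y"
    using assms Tk_par_funpow_leaf[OF assms, where n = n] by (cases y) auto
qed

lemma leaves_Tk:
  assumes "k < n"
  shows "leaves {0..n} 0 (Tk_par n k) = {k + 1..n}"
proof -
  have path_not_leaf: "v + 1 \<in> children {0..n} 0 (Tk_par n k) v" if "v \<le> k" for v
    using that assms by (auto simp: children_def Tk_par_def)
  have childless: "children {0..n} 0 (Tk_par n k) v = {}" if "k < v" for v
    using that by (auto simp: children_def Tk_par_def)
  show ?thesis
  proof (intro set_eqI iffI)
    fix v assume "v \<in> leaves {0..n} 0 (Tk_par n k)"
    then show "v \<in> {k + 1..n}"
      using path_not_leaf[of v] unfolding leaves_def by (cases "v \<le> k") auto
  next
    fix v assume "v \<in> {k + 1..n}"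
    then show "v \<in> leaves {0..n} 0 (Tk_par n k)"
      using childless[of v] unfolding leaves_def by simp
  qed
qed

lemma IDI_Tk:
  assumes "k < n"
  shows "IDI {0..n} 0 (Tk_par n k) = (k + 1) * (n - k)"
proof -
  have "IDI {0..n} 0 (Tk_par n k) = (\<Sum>l\<in>{k + 1..n}. Suc k)"
    unfolding IDI_def leaves_Tk[OF assms] by (intro sum.cong) (auto simp: depth_Tk_leaf)
  then show ?thesis by simp
qed

theorem mainTheorem5:
  shows "(\<forall>(V :: 'a set) r par n. rooted_tree V r par \<and> card (V - {r}) = n \<and> n \<ge> 1 \<longrightarrow>
            IDI V r par \<le> (1 + (n - 1) div 2) * (n - (n - 1) div 2))
       \<and> (\<forall>n :: nat. n \<ge> 1 \<longrightarrow>
            rooted_tree {0..n} 0 (Tk_par n ((n - 1) div 2)) \<and>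
            IDI {0..n} 0 (Tk_par n ((n - 1) div 2)) = (1 + (n - 1) div 2) * (n - (n - 1) div 2))
       \<and> (\<forall>n k :: nat. n \<ge> 1 \<and> k \<le> n - 1 \<longrightarrow>
            rooted_tree {0..n} 0 (Tk_par n k) \<and>
            IDI {0..n} 0 (Tk_par n k) = k * (n - k) + (n - k) \<and>
            k * (n - k) + (n - k) = (k + 1) * (n - k))
       \<and> (\<forall>n k :: nat. n \<ge> 1 \<and> k \<le> n - 1 \<longrightarrow>
            (k + 1) * (n - k) \<le> ((n - 1) div 2 + 1) * (n - (n - 1) div 2))"
proof (intro conjI allI impI; (elim conjE)?)
  fix V :: "'a set" and r par n
  assume "rooted_tree V r par" and "card (V - {r}) = n"
  then show "IDI V r par \<le> (1 + (n - 1) div 2) * (n - (n - 1) div 2)"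
    by (rule IDI_le)
next
  fix n :: nat assume "n \<ge> 1"
  then have "(n - 1) div 2 < n" by simp
  then show "rooted_tree {0..n} 0 (Tk_par n ((n - 1) div 2))"
    and "IDI {0..n} 0 (Tk_par n ((n - 1) div 2)) = (1 + (n - 1) div 2) * (n - (n - 1) div 2)"
    using rooted_tree_Tk IDI_Tk by simp_all
next
  fix n k :: nat assume "n \<ge> 1" and "k \<le> n - 1"
  then have "k < n" by simp
  then show "rooted_tree {0..n} 0 (Tk_par n k)"
    and "IDI {0..n} 0 (Tk_par n k) = k * (n - k) + (n - k)"
    and "k * (n - k) + (n - k) = (k + 1) * (n - k)"
    using rooted_tree_Tk IDI_Tk by simp_all
next
  fix n k :: nat
  show "(k + 1) * (n - k) \<le> ((n - 1) div 2 + 1) * (n - (n - 1) div 2)"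
    by (rule Suc_mult_diff_le_half)
qed

end
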